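(* Let $1\le j\le d$, let $\bm{x}_1,\dots,\bm{x}_{j+1}\in\mathbb{R}^d$ be affinely independent, let $\rho\in\mathbb{R}$, let $\bm{k}\in\mathbb{R}^d$, and set $\sigma_t=\bm{k}\cdot\bm{x}_t$, assumed pairwise distinct. Define $$S_t=\frac{e^{-i\sigma_t}}{\prod_{l=1,\,l\neq t}^{j+1}(\sigma_t-\sigma_l)},\qquad S=\sum_{t=1}^{j+1}S_t,$$ let $\hat B$ be the $(j+2)\times(j+2)$ Cayley–Menger matrix whose first row and first column are $(0,1,\dots,1)$ and whose entry in row $s+1$, column $t+1$ is $\|\bm{x}_s-\bm{x}_t\|^2$ ($1\le s,t\le j+1$), let $\gamma=\sqrt{(-1)^{j+1}\det(\hat B)/2^j}$ (equivalently $\gamma=j!$ times the $j$-dimensional content of the simplex), and let $$F(\bm{k})=\rho\, i^j\,\gamma\, S .$$ Then for each $p\in\{1,\dots,j+1\}$, $$\frac{\partial F(\bm{k})}{\partial \bm{x}_p}=\rho\, i^j\left(\Lambda\,\bm{k}+\Gamma\sum_{\substack{m=1\\ m\neq p}}^{j+1}A_{pm}\bm{D}_{pm}\right),$$ where $\bm{D}_{pm}=2(\bm{x}_p-\bm{x}_m)$, $A_{pm}$ is the entry of $\mathrm{adj}(\hat B)$ in the $p$-th row and $m$-th column when rows and columns are indexed starting from $0$ (i.e. the $(p+1)$-th row and $(m+1)$-th column in $1$-based indexing), $$\Lambda=\gamma\left(-i\,S_p+\sum_{t=1,\,t\neq p}^{j+1}\frac{S_t+S_p}{\sigma_t-\sigma_p}\right),\qquad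 \Gamma=\frac{(-1)^{j+1}/2^j}{\gamma}\,S .$$
   Context: $i$ is the imaginary unit. $F(\bm{k})$ is the non-uniform Fourier transform, at frequency $\bm{k}$, of the piecewise-constant function equal to $\rho$ on the $j$-simplex $\mathrm{conv}\{\bm{x}_1,\dots,\bm{x}_{j+1}\}$ and $0$ elsewhere; $\gamma$ is the content distortion factor (ratio of the simplex content to the content $1/j!$ of the unit orthogonal simplex). Derivatives with respect to $\bm{x}_p\in\mathbb{R}^d$ are gradient vectors in $\mathbb{C}^d$. *)

theory Defs
  imports "HOL-Analysis.Analysis" "Jordan_Normal_Form.Determinant"
begin

text \<open>Vertices are indexed x 1, ..., x (j+1); points live in a Euclidean space of dimension DIM('a) = d.\<close>

definition sig :: "'a::euclidean_space \<Rightarrow> (nat \<Rightarrow> 'a) \<Rightarrow> nat \<Rightarrow> real" where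
  "sig k x t = k \<bullet> x t"

definition S_term :: "'a::euclidean_space \<Rightarrow> (nat \<Rightarrow> 'a) \<Rightarrow> nat \<Rightarrow> nat \<Rightarrow> complex" where
  "S_term k x j t = exp (- \<i> * complex_of_real (sig k x t)) /
      (\<Prod>l\<in>{1..j+1} - {t}. complex_of_real (sig k x t - sig k x l))"

definition S_sum :: "'a::euclidean_space \<Rightarrow> (nat \<Rightarrow> 'a) \<Rightarrow> nat \<Rightarrow> complex" where
  "S_sum k x j = (\<Sum>t\<in>{1..j+1}. S_term k x j t)"

definition cayley_menger :: "(nat \<Rightarrow> 'a::euclidean_space) \<Rightarrow> nat \<Rightarrow> real mat" where
  "cayley_menger x j = mat (j+2) (j+2) (\<lambda>(a,b).
      if a = 0 \<and> b = 0 then 0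
      else if a = 0 \<or> b = 0 then 1
      else (norm (x a - x b))^2)"

definition content_gamma :: "(nat \<Rightarrow> 'a::euclidean_space) \<Rightarrow> nat \<Rightarrow> real" where
  "content_gamma x j = sqrt ((-1)^(j+1) * det (cayley_menger x j) / 2^j)"

definition simplex_FT :: "real \<Rightarrow> 'a::euclidean_space \<Rightarrow> (nat \<Rightarrow> 'a) \<Rightarrow> nat \<Rightarrow> complex" where
  "simplex_FT \<rho> k x j = complex_of_real \<rho> * \<i>^j * complex_of_real (content_gamma x j) * S_sum k x j"

end

theory Submission
  imports Defs
begin

text \<open>
  F = \<rho> i^j \<gamma> S is a product, so its derivative in x_p is \<rho> i^j (\<gamma> dS + S d\<gamma>).
  The sum S depends on x_p only through \<sigma>_p = k \<bullet> x_p: it is the divided difference of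
  z \<mapsto> exp (-i z) at the nodes \<sigma>_t, and differentiating it in the node \<sigma>_p gives \<Lambda> / \<gamma>.
  For \<gamma> = sqrt ((-1)^(j+1) det B / 2^j), Jacobi's formula writes d(det B) as the sum of
  dB_ab times the cofactors; only row and column p of the Cayley--Menger matrix B depend on
  x_p, and by symmetry of B the two contributions coincide, giving 2 \<Sum>_m A_pm D_pm.
  The square root is differentiable because (-1)^(j+1) det B / 2^j is the Gram determinant
  of the edge vectors x_a - x_(j+1), which is positive by affine independence.
\<close>

section \<open>Determinants\<close>

lemma cofactor_cong_except_row:
  assumes "A \<in> carrier_mat n n" "B \<in> carrier_mat n n"
    and "\<And>a b. a < n \<Longrightarrow> b < n \<Longrightarrow> a \<noteq> i \<Longrightarrow> A $$ (a,b) = B $$ (a,b)"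
  shows "cofactor A i c = cofactor B i c"
proof -
  have "mat_delete A i c = mat_delete B i c"
    using assms unfolding mat_delete_def by (intro eq_matI) auto
  then show ?thesis unfolding cofactor_def by simp
qed

lemma cofactor_transpose_symmetric:
  assumes "A \<in> carrier_mat n n" and "A\<^sup>T = A"
  shows "cofactor A i c = cofactor A c i"
proof -
  have "mat_delete A\<^sup>T i c = (mat_delete A c i)\<^sup>T"
    using assms(1) by (intro eq_matI) (auto simp: mat_delete_def)
  then have "det (mat_delete A i c) = det (mat_delete A c i)"
    using assms det_transpose[OF mat_delete_carrier[OF assms(1), of c i]] by simp
  then show ?thesis unfolding cofactor_def by (simp add: add.commute)
qed

lemma det_mat_leibniz:
  "det (mat n n g) = (\<Sum>p | p permutes {0..<n}. signof p * (\<Prod>i=0..<n. g (i, p i)))"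
  by (subst det_def'[of _ n]) (auto intro!: sum.cong prod.cong simp: permutes_in_image)

lemma leibniz_row_replaced_eq_cofactor_expansion:
  assumes "i < n"
  shows "(\<Sum>p | p permutes {0..<n}. signof p * (r (p i) * (\<Prod>l\<in>{0..<n}-{i}. g (l, p l))))
    = (\<Sum>b<n. r b * cofactor (mat n n g) i b)"
proof -
  define R where "R = mat n n (\<lambda>(a,b). if a = i then r b else g (a,b))"
  have "det R = (\<Sum>p | p permutes {0..<n}. signof p * (r (p i) * (\<Prod>l\<in>{0..<n}-{i}. g (l, p l))))"
    unfolding R_def det_mat_leibniz using assms
    by (intro sum.cong refl arg_cong2[where f="(*)"]) (simp add: prod.remove)
  moreover have "det R = (\<Sum>b<n. R $$ (i,b) * cofactor R i b)"
    by (rule laplace_expansion_row) (auto simp: R_def assms)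
  moreover have "cofactor R i b = cofactor (mat n n g) i b" for b
    by (rule cofactor_cong_except_row[where n=n]) (auto simp: R_def)
  ultimately show ?thesis
    using assms by (simp add: R_def)
qed

lemma has_derivative_det_mat:
  fixes f :: "nat \<Rightarrow> nat \<Rightarrow> 'v::real_normed_vector \<Rightarrow> 'a::real_normed_field"
  assumes "\<And>a b. a < n \<Longrightarrow> b < n \<Longrightarrow> (f a b has_derivative f' a b) (at y within S)"
  shows "((\<lambda>y. det (mat n n (\<lambda>(a,b). f a b y))) has_derivative
     (\<lambda>h. \<Sum>a<n. \<Sum>b<n. f' a b h * cofactor (mat n n (\<lambda>(a,b). f a b y)) a b)) (at y within S)"
proof -
  let ?P = "{p. p permutes {0..<n}}"
  have "((\<lambda>y. \<Sum>p\<in>?P. signof p * (\<Prod>i=0..<n. f i (p i) y)) has_derivative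
     (\<lambda>h. \<Sum>p\<in>?P. signof p * (\<Sum>i=0..<n. f' i (p i) h * (\<Prod>l\<in>{0..<n}-{i}. f l (p l) y))))
     (at y within S)"
    using assms by (intro has_derivative_sum has_derivative_mult_right has_derivative_prod)
      (simp add: permutes_in_image)
  moreover have "(\<Sum>p\<in>?P. signof p * (\<Sum>i=0..<n. f' i (p i) h * (\<Prod>l\<in>{0..<n}-{i}. f l (p l) y)))
     = (\<Sum>a<n. \<Sum>b<n. f' a b h * cofactor (mat n n (\<lambda>(a,b). f a b y)) a b)" for h
  proof -
    have "(\<Sum>p\<in>?P. signof p * (\<Sum>i=0..<n. f' i (p i) h * (\<Prod>l\<in>{0..<n}-{i}. f l (p l) y)))
      = (\<Sum>i<n. \<Sum>p\<in>?P. signof p * (f' i (p i) h * (\<Prod>l\<in>{0..<n}-{i}. f l (p l) y)))"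
      by (simp add: sum_distrib_left atLeast0LessThan) (rule sum.swap)
    also have "\<dots> = (\<Sum>a<n. \<Sum>b<n. f' a b h * cofactor (mat n n (\<lambda>(a,b). f a b y)) a b)"
      using leibniz_row_replaced_eq_cofactor_expansion[where g="\<lambda>(a,b). f a b y" and r="\<lambda>b. f' _ b h"]
      by simp
    finally show ?thesis .
  qed
  ultimately show ?thesis
    by (simp add: det_mat_leibniz)
qed

lemma scalar_prod_self_pos:
  fixes v :: "real vec"
  assumes "v \<in> carrier_vec n" and "v \<noteq> 0\<^sub>v n"
  shows "v \<bullet> v > 0"
proof -
  obtain a where a: "a < n" "v $ a \<noteq> 0"
    using assms by (metis carrier_vecD eq_vecI index_zero_vec)
  then have "v $ a * v $ a > 0"
    using not_real_square_gt_zero by blast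
  then show ?thesis
    using a assms(1) by (auto simp: scalar_prod_def intro!: sum_pos2[where i=a])
qed

text \<open>Along the segment from the identity to G the quadratic form stays positive definite, so
  the determinant never vanishes there and keeps the sign of det 1.\<close>
lemma det_pos_if_pos_definite:
  fixes G :: "real mat"
  assumes G: "G \<in> carrier_mat n n"
    and pos: "\<And>v. v \<in> carrier_vec n \<Longrightarrow> v \<noteq> 0\<^sub>v n \<Longrightarrow> v \<bullet> (G *\<^sub>v v) > 0"
  shows "det G > 0"
proof -
  define H where "H t = mat n n (\<lambda>(a,b). t * G $$ (a,b) + (1 - t) * (if a = b then 1 else 0))"
    for t :: real
  have H_mult: "H t *\<^sub>v v = t \<cdot>\<^sub>v (G *\<^sub>v v) + (1 - t) \<cdot>\<^sub>v v" if v: "v \<in> carrier_vec n" for t v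
  proof (rule eq_vecI)
    fix a assume "a < dim_vec (t \<cdot>\<^sub>v (G *\<^sub>v v) + (1 - t) \<cdot>\<^sub>v v)"
    then have a: "a < n" using v by simp
    have "(H t *\<^sub>v v) $ a = (\<Sum>b<n. t * (G $$ (a,b) * v $ b) + (if a = b then (1 - t) * v $ b else 0))"
      using a v by (auto simp: H_def scalar_prod_def atLeast0LessThan algebra_simps intro!: sum.cong)
    then show "(H t *\<^sub>v v) $ a = (t \<cdot>\<^sub>v (G *\<^sub>v v) + (1 - t) \<cdot>\<^sub>v v) $ a"
      using a v G by (simp add: sum.distrib sum_distrib_left scalar_prod_def atLeast0LessThan)
  qed (use v in \<open>simp add: H_def\<close>)
  have "det (H t) \<noteq> 0" if "0 \<le> t" "t \<le> 1" for t
  proof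
    assume "det (H t) = 0"
    then obtain v where v: "v \<in> carrier_vec n" "v \<noteq> 0\<^sub>v n" "H t *\<^sub>v v = 0\<^sub>v n"
      using det_0_iff_vec_prod_zero_field[of "H t" n] by (auto simp: H_def)
    have "0 = v \<bullet> (H t *\<^sub>v v)"
      using v by simp
    also have "\<dots> = t * (v \<bullet> (G *\<^sub>v v)) + (1 - t) * (v \<bullet> v)"
      using v(1) G by (simp add: H_mult scalar_prod_add_distrib[of _ n])
    also have "\<dots> > 0"
      using that pos[OF v(1,2)] scalar_prod_self_pos[OF v(1,2)]
      by (cases "t = 1") (auto intro: add_pos_nonneg add_nonneg_pos)
    finally show False by simp
  qed
  moreover have "continuous_on {0..1} (\<lambda>t. det (H t))"
  proof (intro continuous_at_imp_continuous_on ballI)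
    fix t :: real
    show "isCont (\<lambda>t. det (H t)) t"
      unfolding H_def
      by (rule has_derivative_continuous,
          rule has_derivative_det_mat[where f="\<lambda>a b t. t * G $$ (a,b) + (1 - t) * (if a = b then 1 else 0)"
            and f'="\<lambda>a b h. h * G $$ (a,b) - h * (if a = b then 1 else 0)"])
        (auto intro!: derivative_eq_intros)
  qed
  moreover have "H 0 = 1\<^sub>m n" and "H 1 = G"
    using G by (auto intro!: eq_matI simp: H_def)
  ultimately show ?thesis
    using IVT2'[of "\<lambda>t. det (H t)" 1 0 0] by force
qed

lemma det_gram_pos:
  fixes q :: "nat \<Rightarrow> 'a::real_inner"
  assumes indep: "\<And>c. (\<Sum>a<n. c a *\<^sub>R q a) = 0 \<Longrightarrow> \<forall>a<n. c a = 0"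
  shows "det (mat n n (\<lambda>(a,b). q a \<bullet> q b)) > 0"
proof (rule det_pos_if_pos_definite)
  fix v :: "real vec"
  assume v: "v \<in> carrier_vec n" "v \<noteq> 0\<^sub>v n"
  define w where "w = (\<Sum>a<n. v $ a *\<^sub>R q a)"
  have "v \<bullet> (mat n n (\<lambda>(a,b). q a \<bullet> q b) *\<^sub>v v) = w \<bullet> w"
    using v(1) by (auto simp: w_def scalar_prod_def atLeast0LessThan inner_sum_left inner_sum_right
        sum_distrib_left mult_ac inner_commute intro!: sum.cong)
  moreover have "w \<noteq> 0"
    using v indep[of "\<lambda>a. v $ a"] by (auto simp: w_def intro!: eq_vecI)
  ultimately show "v \<bullet> (mat n n (\<lambda>(a,b). q a \<bullet> q b) *\<^sub>v v) > 0"
    by simp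
qed simp

section \<open>The Cayley--Menger determinant\<close>

lemma det_bordered_mat:
  fixes g :: "nat \<Rightarrow> nat \<Rightarrow> 'a::comm_ring_1"
  assumes "\<And>b. g (n+1) b = 0" and "\<And>a. g a (n+1) = 0"
  shows "det (mat (n+2) (n+2) (\<lambda>(a,b). if a = 0 \<and> b = 0 then 0 else if a = 0 \<or> b = 0 then 1 else g a b))
    = - det (mat n n (\<lambda>(a,b). g (a+1) (b+1)))"
proof -
  define K where "K = mat (n+2) (n+2) (\<lambda>(a,b). if a = 0 \<and> b = 0 then 0 else if a = 0 \<or> b = 0 then 1 else g a b)"
  define M where "M = mat_delete K (n+1) 0"
  have M: "M \<in> carrier_mat (n+1) (n+1)"
    by (simp add: M_def K_def mat_delete_def)
  have last_row: "K $$ (Suc n, b) = (if b = 0 then 1 else 0)" if "b < n+2" for b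
    using that assms(1) by (simp add: K_def)
  have last_col: "M $$ (a, n) = (if a = 0 then 1 else 0)" if "a < n+1" for a
    using that assms(2) by (simp add: M_def K_def mat_delete_def)
  have "det K = (\<Sum>b<n+2. K $$ (n+1,b) * cofactor K (n+1) b)"
    by (rule laplace_expansion_row) (auto simp: K_def)
  also have "\<dots> = (\<Sum>b<n+2. if b = 0 then cofactor K (n+1) b else 0)"
    by (intro sum.cong refl) (simp add: last_row)
  also have "\<dots> = (-1)^(n+1) * det M"
    by (simp add: M_def cofactor_def)
  finally have "det K = (-1)^(n+1) * det M" .
  have "det M = (\<Sum>a<n+1. M $$ (a,n) * cofactor M a n)"
    by (rule laplace_expansion_column[OF M]) simp
  also have "\<dots> = (\<Sum>a<n+1. if a = 0 then cofactor M a n else 0)"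
    by (intro sum.cong refl) (simp add: last_col)
  also have "\<dots> = (-1)^n * det (mat_delete M 0 n)"
    by (simp add: cofactor_def)
  also have "mat_delete M 0 n = mat n n (\<lambda>(a,b). g (a+1) (b+1))"
    by (rule eq_matI) (auto simp: M_def K_def mat_delete_def)
  finally show ?thesis
    using \<open>det K = (-1)^(n+1) * det M\<close> by (simp add: K_def)
qed

definition subtract_row0_mat :: "nat \<Rightarrow> (nat \<Rightarrow> 'a::ring_1) \<Rightarrow> 'a mat" where
  "subtract_row0_mat n u = mat n n (\<lambda>(a,c). (if a = c then 1 else 0) - (if c = 0 \<and> 0 < a then u a else 0))"

lemma subtract_row0_mat_carrier: "subtract_row0_mat n u \<in> carrier_mat n n"
  by (simp add: subtract_row0_mat_def)

lemma det_subtract_row0_mat: "det (subtract_row0_mat n u) = 1"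
proof -
  have "det (subtract_row0_mat n u) = prod_list (diag_mat (subtract_row0_mat n u))"
    by (rule det_lower_triangular[of n]) (auto simp: subtract_row0_mat_def)
  also have "diag_mat (subtract_row0_mat n u) = replicate n 1"
    by (auto simp: diag_mat_def subtract_row0_mat_def intro!: nth_equalityI)
  finally show ?thesis by simp
qed

lemma subtract_row0_mat_mult:
  assumes M: "M \<in> carrier_mat n m" and "0 < n"
  shows "subtract_row0_mat n u * M = mat n m (\<lambda>(a,b). M $$ (a,b) - (if 0 < a then u a * M $$ (0,b) else 0))"
proof (rule eq_matI)
  fix a b assume "a < dim_row (mat n m (\<lambda>(a,b). M $$ (a,b) - (if 0 < a then u a * M $$ (0,b) else 0)))"
    and "b < dim_col (mat n m (\<lambda>(a,b). M $$ (a,b) - (if 0 < a then u a * M $$ (0,b) else 0)))"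
  then have a: "a < n" and b: "b < m" by auto
  have "(subtract_row0_mat n u * M) $$ (a,b)
      = (\<Sum>c<n. (if a = c then M $$ (c,b) else 0) - (if c = 0 then (if 0 < a then u a * M $$ (c,b) else 0) else 0))"
    using a b M by (auto simp: subtract_row0_mat_def scalar_prod_def atLeast0LessThan left_diff_distrib
        intro!: sum.cong)
  then show "(subtract_row0_mat n u * M) $$ (a,b)
      = mat n m (\<lambda>(a,b). M $$ (a,b) - (if 0 < a then u a * M $$ (0,b) else 0)) $$ (a,b)"
    using a b assms(2) by (simp add: sum_subtractf)
qed (use M in \<open>auto simp: subtract_row0_mat_def\<close>)

text \<open>Subtracting \<parallel>x_a - z\<parallel>^2 times the border row and column from row and column a turns
  \<parallel>x_a - x_b\<parallel>^2 into -2 (x_a - z) \<bullet> (x_b - z).\<close>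
lemma det_cayley_menger_eq_bordered_gram:
  fixes x :: "nat \<Rightarrow> 'a::euclidean_space" and z :: 'a
  shows "det (cayley_menger x j) = det (mat (j+2) (j+2) (\<lambda>(a,b). if a = 0 \<and> b = 0 then 0
      else if a = 0 \<or> b = 0 then 1 else -2 * ((x a - z) \<bullet> (x b - z))))"
    (is "_ = det ?K")
proof -
  define CM where "CM = cayley_menger x j"
  define u where "u a = (norm (x a - z))^2" for a
  define L where "L = subtract_row0_mat (j+2) u"
  have CM: "CM \<in> carrier_mat (j+2) (j+2)"
    by (simp add: CM_def cayley_menger_def)
  have L: "L \<in> carrier_mat (j+2) (j+2)"
    by (simp add: L_def subtract_row0_mat_carrier)
  have LCM: "L * CM \<in> carrier_mat (j+2) (j+2)"
    using L CM by simp
  have CM_entry: "CM $$ (a,b) = (if a = 0 \<and> b = 0 then 0 else if a = 0 \<or> b = 0 then 1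
      else (norm (x a - x b))^2)" if "a < j+2" "b < j+2" for a b
    using that by (simp add: CM_def cayley_menger_def)
  have L_CM: "L * CM = mat (j+2) (j+2) (\<lambda>(a,b).
      CM $$ (a,b) - (if 0 < a then u a * CM $$ (0,b) else 0))"
    unfolding L_def using CM by (rule subtract_row0_mat_mult) simp
  have L_CM_T: "L * (L * CM)\<^sup>T = mat (j+2) (j+2) (\<lambda>(a,b).
      (L * CM)\<^sup>T $$ (a,b) - (if 0 < a then u a * (L * CM)\<^sup>T $$ (0,b) else 0))"
    using LCM unfolding L_def by (intro subtract_row0_mat_mult) auto
  have "det ?K = det ((L * (L * CM)\<^sup>T)\<^sup>T)"
  proof (rule arg_cong[where f=det], rule eq_matI)
    fix a b assume "a < dim_row (L * (L * CM)\<^sup>T)\<^sup>T" "b < dim_col (L * (L * CM)\<^sup>T)\<^sup>T"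
    then have "a < j+2" "b < j+2" using L by auto
    moreover have "(norm (x a - x b))^2 = (norm (x a - z))^2 + (norm (x b - z))^2 - 2 * ((x a - z) \<bullet> (x b - z))"
      using arg_cong[of "(x a - z) - (x b - z)" "x a - x b" "\<lambda>v. (norm v)^2"]
      by (simp add: power2_norm_eq_inner inner_diff_left inner_diff_right inner_commute)
    ultimately show "?K $$ (a,b) = (L * (L * CM)\<^sup>T)\<^sup>T $$ (a,b)"
      unfolding L_CM_T using LCM by (simp add: L_CM CM_entry u_def)
  qed (use L in auto)
  also have "\<dots> = det (L * (L * CM)\<^sup>T)"
    by (rule det_transpose) (use L LCM in auto)
  also have "\<dots> = det (L * CM)"
    using L LCM by (simp add: det_mult[of _ "j+2"] det_transpose L_def det_subtract_row0_mat)
  also have "\<dots> = det CM"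
    using L CM by (simp add: det_mult[of _ "j+2"] L_def det_subtract_row0_mat)
  finally show ?thesis by (simp add: CM_def)
qed

lemma det_cayley_menger_eq_gram:
  fixes x :: "nat \<Rightarrow> 'a::euclidean_space"
  shows "(-1)^(j+1) * det (cayley_menger x j)
    = 2^j * det (mat j j (\<lambda>(a,b). (x (a+1) - x (j+1)) \<bullet> (x (b+1) - x (j+1))))"
proof -
  define G where "G = mat j j (\<lambda>(a,b). (x (a+1) - x (j+1)) \<bullet> (x (b+1) - x (j+1)))"
  have "det (cayley_menger x j) = - det (mat j j (\<lambda>(a,b). -2 * ((x (a+1) - x (j+1)) \<bullet> (x (b+1) - x (j+1)))))"
    using det_cayley_menger_eq_bordered_gram[of x j "x (j+1)"]
      det_bordered_mat[of "\<lambda>a b. -2 * ((x a - x (j+1)) \<bullet> (x b - x (j+1)))" j]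
    by simp
  also have "mat j j (\<lambda>(a,b). -2 * ((x (a+1) - x (j+1)) \<bullet> (x (b+1) - x (j+1)))) = (-2) \<cdot>\<^sub>m G"
    by (rule eq_matI) (auto simp: G_def)
  finally have "det (cayley_menger x j) = - ((-2)^j * det G)"
    by (simp add: G_def)
  then show ?thesis
    by (simp add: G_def power_minus')
qed

lemma affine_independent_coeffs_zero:
  fixes x :: "'i \<Rightarrow> 'a::real_vector"
  assumes "finite I" "inj_on x I" "\<not> affine_dependent (x ` I)"
    and "sum c I = 0" "(\<Sum>i\<in>I. c i *\<^sub>R x i) = 0"
  shows "\<forall>i\<in>I. c i = 0"
proof -
  define U where "U = c \<circ> the_inv_into I x"
  have U: "U (x i) = c i" if "i \<in> I" for i
    using that assms(2) by (simp add: U_def the_inv_into_f_f)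
  have "sum U (x ` I) = 0" "(\<Sum>v\<in>x ` I. U v *\<^sub>R v) = 0"
    using assms(2,4,5) U by (simp_all add: sum.reindex)
  then show ?thesis
    using assms(1,3) U by (auto simp: affine_dependent_explicit_finite)
qed

lemma cayley_menger_det_pos:
  fixes x :: "nat \<Rightarrow> 'a::euclidean_space"
  assumes "inj_on x {1..j+1}" and "\<not> affine_dependent (x ` {1..j+1})"
  shows "(-1)^(j+1) * det (cayley_menger x j) > 0"
proof -
  have "det (mat j j (\<lambda>(a,b). (x (a+1) - x (j+1)) \<bullet> (x (b+1) - x (j+1)))) > 0"
  proof (rule det_gram_pos)
    fix c assume c: "(\<Sum>a<j. c a *\<^sub>R (x (a+1) - x (j+1))) = 0"
    define c' where "c' i = (if i = j+1 then - (\<Sum>a<j. c a) else c (i-1))" for i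
    have split: "(\<Sum>i\<in>{1..j+1}. f i) = f (j+1) + (\<Sum>a<j. f (a+1))" for f :: "nat \<Rightarrow> 'b::comm_monoid_add"
      using sum_bounds_lt_plus1[of f j] by (simp add: add.commute)
    have "sum c' {1..j+1} = 0"
      unfolding split by (simp add: c'_def)
    moreover have "(\<Sum>i\<in>{1..j+1}. c' i *\<^sub>R x i) = 0"
      using c unfolding split by (simp add: c'_def scaleR_diff_right sum_subtractf scaleR_sum_left)
    ultimately have c'_0: "\<forall>i\<in>{1..j+1}. c' i = 0"
      using assms by (intro affine_independent_coeffs_zero) auto
    show "\<forall>a<j. c a = 0"
    proof (intro allI impI)
      fix a assume "a < j"
      then show "c a = 0"
        using c'_0[rule_format, of "a+1"] by (simp add: c'_def)
    qed
  qed
  then show ?thesis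
    unfolding det_cayley_menger_eq_gram by simp
qed

lemma has_derivative_norm_diff_fun_upd:
  fixes x :: "'i \<Rightarrow> 'a::real_inner"
  shows "((\<lambda>y. (norm ((x(p := y)) a - (x(p := y)) b))^2) has_derivative
    (\<lambda>h. (if a = p then (2 *\<^sub>R (x p - x b)) \<bullet> h else 0)
       + (if b = p then (2 *\<^sub>R (x p - x a)) \<bullet> h else 0))) (at (x p))"
proof -
  define \<delta> where "\<delta> c h = (if c = p then h else 0)" for c and h :: 'a
  have "((\<lambda>y. (x(p := y)) c) has_derivative \<delta> c) (at (x p))" for c
    by (cases "c = p") (auto simp: \<delta>_def[abs_def])
  then have "((\<lambda>y. ((x(p := y)) a - (x(p := y)) b) \<bullet> ((x(p := y)) a - (x(p := y)) b)) has_derivative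
      (\<lambda>h. (x a - x b) \<bullet> (\<delta> a h - \<delta> b h) + (\<delta> a h - \<delta> b h) \<bullet> (x a - x b))) (at (x p))"
    by (auto intro!: derivative_eq_intros)
  then show ?thesis
    unfolding power2_norm_eq_inner
    by (rule has_derivative_eq_rhs)
      (auto simp: fun_eq_iff \<delta>_def inner_diff_left inner_diff_right inner_commute)
qed

lemma sum_sum_row_col_eq_double_row:
  fixes w :: "nat \<Rightarrow> 'a::comm_semiring_1"
  assumes "p < n" and "\<And>m. m < n \<Longrightarrow> C m p = C p m"
  shows "(\<Sum>a<n. \<Sum>b<n. ((if a = p then w b else 0) + (if b = p then w a else 0)) * C a b)
    = 2 * (\<Sum>m<n. w m * C p m)"
proof -
  have "(\<Sum>a<n. \<Sum>b<n. ((if a = p then w b else 0) + (if b = p then w a else 0)) * C a b)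
      = (\<Sum>a<n. \<Sum>b<n. (if a = p then w b * C p b else 0) + (if b = p then w a * C a p else 0))"
    by (intro sum.cong refl) (simp add: distrib_right)
  also have "\<dots> = (\<Sum>a<n. \<Sum>b<n. if a = p then w b * C p b else 0)
      + (\<Sum>a<n. \<Sum>b<n. if b = p then w a * C a p else 0)"
    by (simp only: sum.distrib)
  also have "(\<Sum>a<n. \<Sum>b<n. if a = p then w b * C p b else 0) = (\<Sum>b<n. w b * C p b)"
    using assms(1) by (subst sum.swap) simp
  also have "(\<Sum>a<n. \<Sum>b<n. if b = p then w a * C a p else 0) = (\<Sum>a<n. w a * C p a)"
    using assms by simp
  finally show ?thesis
    by (simp add: mult_2)
qed

lemma has_derivative_cayley_menger_entry:
  fixes x :: "nat \<Rightarrow> 'a::euclidean_space"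
  assumes "p \<noteq> 0" and "a < j+2" and "b < j+2"
  shows "((\<lambda>y. cayley_menger (x(p := y)) j $$ (a,b)) has_derivative
    (\<lambda>h. (if a = p \<and> b \<noteq> 0 then (2 *\<^sub>R (x p - x b)) \<bullet> h else 0)
       + (if b = p \<and> a \<noteq> 0 then (2 *\<^sub>R (x p - x a)) \<bullet> h else 0))) (at (x p))"
proof -
  consider "a = 0" | "b = 0" | "a \<noteq> 0" "b \<noteq> 0"
    by blast
  then show ?thesis
    using assms has_derivative_norm_diff_fun_upd[of x p a b]
    by cases (simp_all add: cayley_menger_def cong: if_cong)
qed

lemma has_derivative_det_cayley_menger:
  fixes x :: "nat \<Rightarrow> 'a::euclidean_space"
  assumes p: "p \<in> {1..j+1}"
  shows "((\<lambda>y. det (cayley_menger (x(p := y)) j)) has_derivative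
     (\<lambda>h. 2 * (\<Sum>m\<in>{1..j+1} - {p}. adj_mat (cayley_menger x j) $$ (p, m) * ((2 *\<^sub>R (x p - x m)) \<bullet> h))))
     (at (x p))"
proof -
  define CM where "CM = cayley_menger x j"
  define w where "w m h = (if m = 0 then 0 else (2 *\<^sub>R (x p - x m)) \<bullet> h)" for m h
  have CM: "CM \<in> carrier_mat (j+2) (j+2)" and "CM\<^sup>T = CM"
    by (auto intro!: eq_matI simp: CM_def cayley_menger_def norm_minus_commute)
  then have cofactor_sym: "cofactor CM m p = cofactor CM p m" for m
    by (rule cofactor_transpose_symmetric)
  have CM_mat: "cayley_menger x' j = mat (j+2) (j+2) (\<lambda>(a,b). cayley_menger x' j $$ (a,b))" for x'
    by (rule eq_matI) (auto simp: cayley_menger_def)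
  have "((\<lambda>y. det (mat (j+2) (j+2) (\<lambda>(a,b). cayley_menger (x(p := y)) j $$ (a,b)))) has_derivative
     (\<lambda>h. \<Sum>a<j+2. \<Sum>b<j+2. ((if a = p then w b h else 0) + (if b = p then w a h else 0))
        * cofactor (mat (j+2) (j+2) (\<lambda>(a,b). cayley_menger (x(p := x p)) j $$ (a,b))) a b)) (at (x p))"
  proof (rule has_derivative_det_mat)
    fix a b assume "a < j+2" "b < j+2"
    with p have "((\<lambda>y. cayley_menger (x(p := y)) j $$ (a,b)) has_derivative
        (\<lambda>h. (if a = p \<and> b \<noteq> 0 then (2 *\<^sub>R (x p - x b)) \<bullet> h else 0)
          + (if b = p \<and> a \<noteq> 0 then (2 *\<^sub>R (x p - x a)) \<bullet> h else 0))) (at (x p))"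
      by (intro has_derivative_cayley_menger_entry) auto
    then show "((\<lambda>y. cayley_menger (x(p := y)) j $$ (a,b)) has_derivative
        (\<lambda>h. (if a = p then w b h else 0) + (if b = p then w a h else 0))) (at (x p))"
      by (rule has_derivative_eq_rhs) (auto simp: fun_eq_iff w_def)
  qed
  then have "((\<lambda>y. det (cayley_menger (x(p := y)) j)) has_derivative
     (\<lambda>h. \<Sum>a<j+2. \<Sum>b<j+2. ((if a = p then w b h else 0) + (if b = p then w a h else 0))
        * cofactor CM a b)) (at (x p))"
    by (simp only: CM_mat[symmetric] fun_upd_triv CM_def)
  moreover have "(\<Sum>a<j+2. \<Sum>b<j+2. ((if a = p then w b h else 0) + (if b = p then w a h else 0))
        * cofactor CM a b)
      = 2 * (\<Sum>m\<in>{1..j+1} - {p}. adj_mat CM $$ (p, m) * ((2 *\<^sub>R (x p - x m)) \<bullet> h))" for h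
  proof -
    have "(\<Sum>a<j+2. \<Sum>b<j+2. ((if a = p then w b h else 0) + (if b = p then w a h else 0))
        * cofactor CM a b) = 2 * (\<Sum>m<j+2. w m h * cofactor CM p m)"
      using p cofactor_sym by (intro sum_sum_row_col_eq_double_row) auto
    also have "(\<Sum>m<j+2. w m h * cofactor CM p m) = (\<Sum>m\<in>{1..j+1}. w m h * cofactor CM p m)"
      by (rule sum.mono_neutral_right) (auto simp: w_def)
    also have "\<dots> = (\<Sum>m\<in>{1..j+1} - {p}. w m h * cofactor CM p m)"
      using p by (subst sum.remove[of _ p]) (auto simp: w_def)
    also have "\<dots> = (\<Sum>m\<in>{1..j+1} - {p}. adj_mat CM $$ (p, m) * ((2 *\<^sub>R (x p - x m)) \<bullet> h))"
      using CM p by (intro sum.cong refl) (auto simp: w_def adj_mat_def cofactor_sym)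
    finally show ?thesis .
  qed
  ultimately show ?thesis
    by (simp add: CM_def)
qed

lemma has_derivative_content_gamma:
  fixes x :: "nat \<Rightarrow> 'a::euclidean_space"
  assumes "inj_on x {1..j+1}" and "\<not> affine_dependent (x ` {1..j+1})" and "p \<in> {1..j+1}"
  shows "((\<lambda>y. content_gamma (x(p := y)) j) has_derivative
     (\<lambda>h. ((-1)^(j+1) / 2^j) / content_gamma x j *
        (\<Sum>m\<in>{1..j+1} - {p}. adj_mat (cayley_menger x j) $$ (p, m) * ((2 *\<^sub>R (x p - x m)) \<bullet> h))))
     (at (x p))"
proof -
  define c :: real where "c = (-1)^(j+1) / 2^j"
  define A where "A h = (\<Sum>m\<in>{1..j+1} - {p}. adj_mat (cayley_menger x j) $$ (p, m) * ((2 *\<^sub>R (x p - x m)) \<bullet> h))"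
    for h
  have gamma: "content_gamma x' j = sqrt (c * det (cayley_menger x' j))" for x' :: "nat \<Rightarrow> 'a"
    by (simp add: content_gamma_def c_def)
  have "c * det (cayley_menger (x(p := x p)) j) > 0"
    using cayley_menger_det_pos[OF assms(1,2)] by (simp add: c_def divide_neg_pos)
  moreover have "((\<lambda>y. c * det (cayley_menger (x(p := y)) j)) has_derivative (\<lambda>h. c * (2 * A h))) (at (x p))"
    unfolding A_def by (intro has_derivative_mult_right has_derivative_det_cayley_menger assms(3))
  ultimately have "((\<lambda>y. sqrt (c * det (cayley_menger (x(p := y)) j))) has_derivative
      (\<lambda>h. c * (2 * A h) * (inverse (sqrt (c * det (cayley_menger (x(p := x p)) j))) / 2))) (at (x p))"
    by (rule has_derivative_real_sqrt)
  then show ?thesis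
    unfolding gamma A_def[symmetric] c_def[symmetric] fun_upd_triv
    by (rule has_derivative_eq_rhs) (simp add: fun_eq_iff inverse_eq_divide)
qed

section \<open>Divided differences of the exponential\<close>

text \<open>S_term k x j t is exp_divided_term \<sigma> {1..j+1} t for the nodes \<sigma> t = k \<bullet> x t.\<close>
definition exp_divided_term :: "('i \<Rightarrow> complex) \<Rightarrow> 'i set \<Rightarrow> 'i \<Rightarrow> complex" where
  "exp_divided_term \<sigma> I t = exp (- \<i> * \<sigma> t) / (\<Prod>l\<in>I - {t}. \<sigma> t - \<sigma> l)"

lemma has_field_derivative_exp_divided_term:
  fixes \<sigma> :: "'i \<Rightarrow> complex"
  assumes "finite I" and "t \<in> I" and "inj_on \<sigma> I"
  shows "((\<lambda>z. exp_divided_term (\<sigma>(p := z)) I t) has_field_derivative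
     exp_divided_term \<sigma> I t * (- \<i> * of_bool (t = p)
       - (\<Sum>l\<in>I - {t}. (of_bool (t = p) - of_bool (l = p)) / (\<sigma> t - \<sigma> l)))) (at (\<sigma> p))"
proof -
  define c :: "'i \<Rightarrow> complex" where "c l = of_bool (l = p)" for l
  define P where "P z = (\<Prod>l\<in>I - {t}. (\<sigma>(p := z)) t - (\<sigma>(p := z)) l)" for z
  have upd: "((\<lambda>z. (\<sigma>(p := z)) l) has_field_derivative c l) (at (\<sigma> p))" for l
    by (cases "l = p") (auto simp: c_def)
  have P0: "P (\<sigma> p) \<noteq> 0"
    using assms by (auto simp: P_def inj_on_def)
  have "((\<lambda>z. exp (- \<i> * (\<sigma>(p := z)) t)) has_field_derivative exp (- \<i> * \<sigma> t) * (- \<i> * c t)) (at (\<sigma> p))"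
    by (auto intro!: derivative_eq_intros upd simp del: fun_upd_apply)
  moreover have "(P has_field_derivative P (\<sigma> p) * (\<Sum>l\<in>I - {t}. (c t - c l) / (\<sigma> t - \<sigma> l))) (at (\<sigma> p))"
    unfolding P_def using assms
    by (intro has_field_derivative_prod'[THEN DERIV_cong])
      (auto simp: inj_on_def intro!: derivative_eq_intros upd[simplified])
  ultimately have deriv: "((\<lambda>z. exp (- \<i> * (\<sigma>(p := z)) t) / P z) has_field_derivative
      (exp (- \<i> * \<sigma> t) * (- \<i> * c t) * P (\<sigma> p)
        - exp (- \<i> * \<sigma> t) * (P (\<sigma> p) * (\<Sum>l\<in>I - {t}. (c t - c l) / (\<sigma> t - \<sigma> l))))
      / (P (\<sigma> p) * P (\<sigma> p))) (at (\<sigma> p))"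
    using P0 by (auto intro: DERIV_divide[THEN DERIV_cong])
  have fun_eq: "(\<lambda>z. exp (- \<i> * (\<sigma>(p := z)) t) / P z) = (\<lambda>z. exp_divided_term (\<sigma>(p := z)) I t)"
    by (simp add: fun_eq_iff exp_divided_term_def P_def)
  have P_eq: "P (\<sigma> p) = (\<Prod>l\<in>I - {t}. \<sigma> t - \<sigma> l)"
    by (simp add: P_def)
  show ?thesis
    unfolding c_def[symmetric] fun_eq[symmetric]
    by (rule DERIV_cong[OF deriv]) (use P0 in \<open>simp add: exp_divided_term_def P_eq[symmetric] field_simps\<close>)
qed

lemma has_field_derivative_sum_exp_divided_terms:
  fixes \<sigma> :: "'i \<Rightarrow> complex"
  assumes "finite I" and "p \<in> I" and "inj_on \<sigma> I"
  shows "((\<lambda>z. \<Sum>t\<in>I. exp_divided_term (\<sigma>(p := z)) I t) has_field_derivative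
     - \<i> * exp_divided_term \<sigma> I p
     + (\<Sum>t\<in>I - {p}. (exp_divided_term \<sigma> I t + exp_divided_term \<sigma> I p) / (\<sigma> t - \<sigma> p)))
     (at (\<sigma> p))"
proof -
  let ?T = "exp_divided_term \<sigma> I"
  define D where "D t = ?T t * (- \<i> * of_bool (t = p)
       - (\<Sum>l\<in>I - {t}. (of_bool (t = p) - of_bool (l = p)) / (\<sigma> t - \<sigma> l)))" for t
  have "((\<lambda>z. \<Sum>t\<in>I. exp_divided_term (\<sigma>(p := z)) I t) has_field_derivative (\<Sum>t\<in>I. D t)) (at (\<sigma> p))"
    unfolding D_def using assms by (intro DERIV_sum has_field_derivative_exp_divided_term) auto
  moreover have D_p: "D p = - \<i> * ?T p + (\<Sum>t\<in>I - {p}. ?T p / (\<sigma> t - \<sigma> p))"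
  proof -
    have "(\<Sum>l\<in>I - {p}. 1 / (\<sigma> p - \<sigma> l)) = - (\<Sum>t\<in>I - {p}. 1 / (\<sigma> t - \<sigma> p))"
      by (simp add: sum_negf[symmetric] minus_divide_right)
    then show ?thesis
      by (simp add: D_def algebra_simps sum_distrib_left)
  qed
  moreover have D_t: "D t = ?T t / (\<sigma> t - \<sigma> p)" if "t \<in> I - {p}" for t
  proof -
    have "(\<Sum>l\<in>I - {t}. (of_bool (t = p) - of_bool (l = p)) / (\<sigma> t - \<sigma> l))
        = (\<Sum>l\<in>I - {t}. if l = p then - 1 / (\<sigma> t - \<sigma> p) else 0)"
      using that by (intro sum.cong refl) auto
    then show ?thesis
      using that assms(1,2) by (simp add: D_def)
  qed
  moreover have "(\<Sum>t\<in>I. D t) = D p + (\<Sum>t\<in>I - {p}. D t)"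
    using assms(1,2) by (rule sum.remove)
  ultimately show ?thesis
    by (simp add: add_divide_distrib sum.distrib add_ac add_diff_eq)
qed

lemma has_derivative_S_sum:
  fixes x :: "nat \<Rightarrow> 'a::euclidean_space" and k :: 'a
  assumes "inj_on (sig k x) {1..j+1}" and "p \<in> {1..j+1}"
  shows "((\<lambda>y. S_sum k (x(p := y)) j) has_derivative
     (\<lambda>h. (- \<i> * S_term k x j p
          + (\<Sum>t\<in>{1..j+1} - {p}. (S_term k x j t + S_term k x j p) / complex_of_real (sig k x t - sig k x p)))
        * complex_of_real (k \<bullet> h))) (at (x p))"
proof -
  define \<sigma> where "\<sigma> = (\<lambda>t. complex_of_real (sig k x t))"
  have S_term_eq: "S_term k x' j t = exp_divided_term (\<lambda>t. complex_of_real (sig k x' t)) {1..j+1} t"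
    for x' :: "nat \<Rightarrow> 'a" and t
    by (simp add: S_term_def exp_divided_term_def)
  have "(\<lambda>t. complex_of_real (sig k (x(p := y)) t)) = \<sigma>(p := complex_of_real (k \<bullet> y))" for y
    by (auto simp: \<sigma>_def sig_def)
  then have S_sum_eq: "S_sum k (x(p := y)) j
      = (\<Sum>t\<in>{1..j+1}. exp_divided_term (\<sigma>(p := complex_of_real (k \<bullet> y))) {1..j+1} t)" for y
    by (simp add: S_sum_def S_term_eq)
  have "inj_on \<sigma> {1..j+1}"
    using assms(1) by (simp add: \<sigma>_def inj_on_def)
  then have outer: "((\<lambda>z. \<Sum>t\<in>{1..j+1}. exp_divided_term (\<sigma>(p := z)) {1..j+1} t) has_derivative
      (*) (- \<i> * exp_divided_term \<sigma> {1..j+1} p + (\<Sum>t\<in>{1..j+1} - {p}.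
        (exp_divided_term \<sigma> {1..j+1} t + exp_divided_term \<sigma> {1..j+1} p) / (\<sigma> t - \<sigma> p))))
      (at (complex_of_real (k \<bullet> x p)))"
    using has_field_derivative_sum_exp_divided_terms[of "{1..j+1}" p \<sigma>] assms(2)
    by (simp add: has_field_derivative_def \<sigma>_def sig_def)
  have inner: "((\<lambda>y. complex_of_real (k \<bullet> y)) has_derivative (\<lambda>h. complex_of_real (k \<bullet> h))) (at (x p))"
    by (auto intro!: derivative_eq_intros)
  show ?thesis
    unfolding S_sum_eq using has_derivative_compose[OF inner outer]
    by (rule has_derivative_eq_rhs) (simp add: fun_eq_iff S_term_eq \<sigma>_def mult.commute)
qed

theorem proposition2:
  fixes x :: "nat \<Rightarrow> 'a::euclidean_space" and k :: 'a and \<rho> :: real and j p :: nat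
  assumes "1 \<le> j" and "j \<le> DIM('a)"
    and "inj_on x {1..j+1}" and "\<not> affine_dependent (x ` {1..j+1})"
    and "inj_on (sig k x) {1..j+1}"
    and "p \<in> {1..j+1}"
  shows "((\<lambda>y. simplex_FT \<rho> k (x(p := y)) j) has_derivative
      (\<lambda>h. complex_of_real \<rho> * \<i>^j *
        ( (complex_of_real (content_gamma x j) *
              (- \<i> * S_term k x j p
               + (\<Sum>t\<in>{1..j+1} - {p}. (S_term k x j t + S_term k x j p)
                                           / complex_of_real (sig k x t - sig k x p))))
            * complex_of_real (k \<bullet> h)
        + (complex_of_real (((-1)^(j+1) / 2^j) / content_gamma x j) * S_sum k x j)
            * complex_of_real (\<Sum>m\<in>{1..j+1} - {p}.
                 adj_mat (cayley_menger x j) $$ (p, m) * ((2 *\<^sub>R (x p - x m)) \<bullet> h)))))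
     (at (x p))"
proof -
  have FT_eq: "simplex_FT \<rho> k x' j
      = complex_of_real \<rho> * \<i>^j * (complex_of_real (content_gamma x' j) * S_sum k x' j)" for x'
    by (simp add: simplex_FT_def mult.assoc)
  have "((\<lambda>y. complex_of_real (content_gamma (x(p := y)) j) * S_sum k (x(p := y)) j) has_derivative
     (\<lambda>h. complex_of_real (content_gamma x j)
          * ((- \<i> * S_term k x j p + (\<Sum>t\<in>{1..j+1} - {p}. (S_term k x j t + S_term k x j p)
                / complex_of_real (sig k x t - sig k x p))) * complex_of_real (k \<bullet> h))
        + complex_of_real (((-1)^(j+1) / 2^j) / content_gamma x j * (\<Sum>m\<in>{1..j+1} - {p}.
                adj_mat (cayley_menger x j) $$ (p, m) * ((2 *\<^sub>R (x p - x m)) \<bullet> h)))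
          * S_sum k x j)) (at (x p))"
    using has_derivative_mult[OF has_derivative_of_real[OF has_derivative_content_gamma[OF assms(3,4,6)]]
        has_derivative_S_sum[OF assms(5,6)]]
    by simp
  then show ?thesis
    unfolding FT_eq
    by (rule has_derivative_mult_right[THEN has_derivative_eq_rhs]) (simp only: of_real_mult mult_ac)
qed

end
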